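(* The value function $v$ is decreasing on $[0,\infty)$, satisfies $\frac{\beta u_0-1}{r}\le v(z)\le \frac{\beta u_0}{r}$ for all $z\ge 0$, and $\lim_{z\to\infty} v(z)=\frac{\beta u_0-1}{r}$.
   Context: Let $(\Omega,\mathcal F,\mathbb P)$ be a complete probability space carrying a standard Brownian motion $W=(W(t))_{t\ge0}$. Fix parameters $\mu\in\mathbb R$, $\sigma>0$, a maximal dividend rate $u_0>0$, a discount rate $r>0$, a weight $\beta>0$ and a critical drawdown level $d>0$. Let $\mathcal U$ be the set of adapted processes $U=(U(t))_{t\ge0}$ with $0\le U(t)\le u_0$ for all $t$ (admissible dividend strategies). For $U\in\mathcal U$ put $X^U(t)=\mu t+\sigma W(t)-\int_0^t U(s)\,ds$; for $z\ge0$ put $M_z^U(t)=\max\{z,\sup_{s\in[0,t]}X^U(s)\}$ and $\Delta_z^U(t)=M_z^U(t)-X^U(t)$ (the drawdown process with initial past maximum $z$). Define $v^U(z)=\mathbb E\big[\beta\int_0^\infty e^{-rt}U(t)\,dt-\int_0^\infty e^{-rt}\mathbf 1_{\{\Delta_z^U(t)>d\}}\,dt\big]$ and the value function $v(z)=\sup_{U\in\mathcal U}v^U(z)$, $z\ge0$. *)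

theory Defs
  imports "HOL-Probability.Probability"
begin

definition is_standard_BM :: "'a measure \<Rightarrow> (real \<Rightarrow> 'a \<Rightarrow> real) \<Rightarrow> bool" where
  "is_standard_BM M W \<longleftrightarrow>
     prob_space M \<and>
     (\<forall>t\<ge>0. W t \<in> borel_measurable M) \<and>
     (\<forall>\<omega>\<in>space M. W 0 \<omega> = 0 \<and> continuous_on {0..} (\<lambda>t. W t \<omega>)) \<and>
     (\<forall>ts. sorted ts \<and> distinct ts \<and> (\<forall>t\<in>set ts. 0 \<le> t) \<longrightarrow>
        prob_space.indep_vars M (\<lambda>_. borel) (\<lambda>i \<omega>. W (ts ! Suc i) \<omega> - W (ts ! i) \<omega>)
          {..<length ts - 1}) \<and>
     (\<forall>s t. 0 \<le> s \<and> s < t \<longrightarrow>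
        distributed M lborel (\<lambda>\<omega>. W t \<omega> - W s \<omega>) (normal_density 0 (sqrt (t - s))))"

definition nat_filtration :: "'a measure \<Rightarrow> (real \<Rightarrow> 'a \<Rightarrow> real) \<Rightarrow> real \<Rightarrow> 'a set set" where
  "nat_filtration M W t =
     sigma_sets (space M) (\<Union>s\<in>{0..t}. {W s -` B \<inter> space M | B. B \<in> sets borel})"

definition aug_filtration :: "'a measure \<Rightarrow> (real \<Rightarrow> 'a \<Rightarrow> real) \<Rightarrow> real \<Rightarrow> 'a set set" where
  "aug_filtration M W t =
     {S \<union> N | S N N'. S \<in> nat_filtration M W t \<and> N' \<in> null_sets M \<and> N \<subseteq> N'}"

definition admissible :: "'a measure \<Rightarrow> (real \<Rightarrow> 'a \<Rightarrow> real) \<Rightarrow> real \<Rightarrow> (real \<Rightarrow> 'a \<Rightarrow> real) set" where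
  "admissible M W u0 =
     {U. (\<forall>t\<ge>0. \<forall>B\<in>sets borel. U t -` B \<inter> space M \<in> aug_filtration M W t) \<and>
         (\<lambda>(t, \<omega>). U t \<omega>) \<in> borel_measurable (lborel \<Otimes>\<^sub>M M) \<and>
         (\<forall>t\<ge>0. \<forall>\<omega>\<in>space M. 0 \<le> U t \<omega> \<and> U t \<omega> \<le> u0)}"

definition surplus :: "real \<Rightarrow> real \<Rightarrow> (real \<Rightarrow> 'a \<Rightarrow> real) \<Rightarrow> (real \<Rightarrow> 'a \<Rightarrow> real) \<Rightarrow> real \<Rightarrow> 'a \<Rightarrow> real" where
  "surplus \<mu> \<sigma> W U t \<omega> = \<mu> * t + \<sigma> * W t \<omega> - (LINT s:{0..t}|lborel. U s \<omega>)"

definition run_max :: "real \<Rightarrow> real \<Rightarrow> (real \<Rightarrow> 'a \<Rightarrow> real) \<Rightarrow> (real \<Rightarrow> 'a \<Rightarrow> real) \<Rightarrow> real \<Rightarrow> real \<Rightarrow> 'a \<Rightarrow> real" where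
  "run_max \<mu> \<sigma> W U z t \<omega> = max z (SUP s\<in>{0..t}. surplus \<mu> \<sigma> W U s \<omega>)"

definition drawdown :: "real \<Rightarrow> real \<Rightarrow> (real \<Rightarrow> 'a \<Rightarrow> real) \<Rightarrow> (real \<Rightarrow> 'a \<Rightarrow> real) \<Rightarrow> real \<Rightarrow> real \<Rightarrow> 'a \<Rightarrow> real" where
  "drawdown \<mu> \<sigma> W U z t \<omega> = run_max \<mu> \<sigma> W U z t \<omega> - surplus \<mu> \<sigma> W U t \<omega>"

definition perf :: "'a measure \<Rightarrow> (real \<Rightarrow> 'a \<Rightarrow> real) \<Rightarrow> real \<Rightarrow> real \<Rightarrow> real \<Rightarrow> real \<Rightarrow> real \<Rightarrow>
    (real \<Rightarrow> 'a \<Rightarrow> real) \<Rightarrow> real \<Rightarrow> real" where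
  "perf M W \<mu> \<sigma> r \<beta> d U z =
     (\<integral>\<omega>. \<beta> * (LINT t:{0..}|lborel. exp (- r * t) * U t \<omega>)
           - (LINT t:{0..}|lborel. exp (- r * t) *
                (if drawdown \<mu> \<sigma> W U z t \<omega> > d then 1 else 0)) \<partial>M)"

definition value_fun :: "'a measure \<Rightarrow> (real \<Rightarrow> 'a \<Rightarrow> real) \<Rightarrow> real \<Rightarrow> real \<Rightarrow> real \<Rightarrow> real \<Rightarrow> real \<Rightarrow> real \<Rightarrow>
    real \<Rightarrow> real" where
  "value_fun M W \<mu> \<sigma> u0 r \<beta> d z = (SUP U\<in>admissible M W u0. perf M W \<mu> \<sigma> r \<beta> d U z)"

end

(*
  The performance of a strategy U is E[beta dividends(U) - penalty(U, z)], where dividends(U) is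
  the discounted dividend stream and penalty(U, z) the discounted time spent in a drawdown larger
  than d.  Since 0 <= U <= u0, dividends(U) <= u0/r and 0 <= penalty(U, z) <= 1/r, which gives
  the upper bound, while the constant strategy u0 pays exactly u0/r and so earns at least
  (beta u0 - 1)/r.  A larger initial maximum z makes the drawdown pathwise larger, hence v is
  decreasing.
  For the limit, note that whenever the uncontrolled surplus mu t + sigma W(t) lies below z - d,
  the drawdown exceeds d whatever the strategy.  Hence penalty(U, z) >= 1/r - time_above(z - d),
  where time_above(a) is the discounted time the uncontrolled surplus spends above a, so that
  v(z) <= (beta u0 - 1)/r + E time_above(z - d); and E time_above(a) -> 0 as a -> oo by dominated
  convergence.
  Since the Bochner integral of a non-integrable function is 0, all of this needs the integrands
  to be measurable in omega.  This follows from the continuity of the surplus paths, which lets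
  the running maximum be computed over rational times.
*)
theory Submission
  imports Defs
begin

section \<open>Discounted integrals\<close>

lemma has_bochner_integral_exp_neg:
  fixes r :: real assumes "r > 0"
  shows "has_bochner_integral lborel (\<lambda>t. indicator {0..} t * exp (- r * t)) (1 / r)"
proof (rule has_bochner_integral_nn_integral)
  show "(\<integral>\<^sup>+ x. ennreal (indicator {0..} x * exp (- r * x)) \<partial>lborel) = ennreal (1 / r)"
    using nn_integral_has_integral_lebesgue[OF _ has_integral_exp_minus_to_infinity[OF assms, of 0]]
    by simp
qed (use assms in auto)

lemma
  fixes r :: real assumes "r > 0"
  shows set_integrable_exp_neg: "set_integrable lborel {0..} (\<lambda>t. exp (- r * t))"
    and set_integral_exp_neg: "(LINT t:{0..}|lborel. exp (- r * t)) = 1 / r"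
  using has_bochner_integral_exp_neg[OF assms]
  by (auto simp: set_integrable_def set_lebesgue_integral_def has_bochner_integral_iff)

definition discounted :: "real \<Rightarrow> (real \<Rightarrow> real) \<Rightarrow> real" where
  "discounted r f = (LINT t:{0..}|lborel. exp (- r * t) * f t)"

lemma discounted_const: "r > 0 \<Longrightarrow> discounted r (\<lambda>_. c) = c / r"
  unfolding discounted_def using set_integral_exp_neg[of r] by simp

lemma discounted_nonneg: "(\<And>t. 0 \<le> t \<Longrightarrow> 0 \<le> f t) \<Longrightarrow> 0 \<le> discounted r f"
  unfolding discounted_def set_lebesgue_integral_def
  by (rule Bochner_Integration.integral_nonneg) (auto simp: indicator_def)

lemma set_integrable_discounted:
  fixes f :: "real \<Rightarrow> real"
  assumes r: "r > 0" and meas: "(\<lambda>t. f (max 0 t)) \<in> borel_measurable lborel"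
    and bound: "\<And>t. 0 \<le> t \<Longrightarrow> \<bar>f t\<bar> \<le> c"
  shows "set_integrable lborel {0..} (\<lambda>t. exp (- r * t) * f t)"
proof (rule set_integrable_bound[where f="\<lambda>t. c * exp (- r * t)"])
  show "set_integrable lborel {0..} (\<lambda>t. c * exp (- r * t))"
    using set_integrable_exp_neg[OF r] by simp
  have "(\<lambda>t. indicator {0..} t *\<^sub>R (exp (- r * t) * f t))
      = (\<lambda>t. indicator {0..} t *\<^sub>R (exp (- r * t) * f (max 0 t)))"
    by (auto simp: fun_eq_iff indicator_def)
  then show "set_borel_measurable lborel {0..} (\<lambda>t. exp (- r * t) * f t)"
    unfolding set_borel_measurable_def using meas by simp
  show "AE t in lborel. t \<in> {0..} \<longrightarrow> norm (exp (- r * t) * f t) \<le> norm (c * exp (- r * t))"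
    using bound
    by (intro AE_I2)
      (auto simp: abs_mult mult.commute intro!: mult_left_mono intro: order_trans[OF _ abs_ge_self])
qed

lemma discounted_mono:
  assumes "set_integrable lborel {0..} (\<lambda>t. exp (- r * t) * f t)"
    and "set_integrable lborel {0..} (\<lambda>t. exp (- r * t) * g t)"
    and "\<And>t. 0 \<le> t \<Longrightarrow> f t \<le> g t"
  shows "discounted r f \<le> discounted r g"
  unfolding discounted_def using assms by (intro set_integral_mono) auto

lemma discounted_add:
  assumes "set_integrable lborel {0..} (\<lambda>t. exp (- r * t) * f t)"
    and "set_integrable lborel {0..} (\<lambda>t. exp (- r * t) * g t)"
  shows "discounted r (\<lambda>t. f t + g t) = discounted r f + discounted r g"
  unfolding discounted_def using assms by (simp add: distrib_left)

lemma discounted_le: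
  fixes f :: "real \<Rightarrow> real"
  assumes r: "r > 0" and meas: "(\<lambda>t. f (max 0 t)) \<in> borel_measurable lborel"
    and bound: "\<And>t. 0 \<le> t \<Longrightarrow> 0 \<le> f t \<and> f t \<le> c"
  shows "discounted r f \<le> c / r"
proof -
  have "discounted r f \<le> discounted r (\<lambda>_. c)"
    using bound set_integrable_exp_neg[OF r]
    by (intro discounted_mono set_integrable_discounted[OF r meas, of c]) auto
  then show ?thesis using discounted_const[OF r] by simp
qed

lemma borel_measurable_discounted:
  fixes f :: "real \<Rightarrow> 'a \<Rightarrow> real"
  assumes "(\<lambda>p. f (max 0 (fst p)) (snd p)) \<in> borel_measurable (lborel \<Otimes>\<^sub>M M)"
  shows "(\<lambda>\<omega>. discounted r (\<lambda>t. f t \<omega>)) \<in> borel_measurable M"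
proof -
  note assms[measurable]
  have "(\<lambda>q. (\<lambda>p. f (max 0 (fst p)) (snd p)) (snd q, fst q)) \<in> borel_measurable (M \<Otimes>\<^sub>M lborel)"
    by measurable
  then have [measurable]: "(\<lambda>q. f (max 0 (snd q)) (fst q)) \<in> borel_measurable (M \<Otimes>\<^sub>M lborel)"
    by simp
  have "discounted r (\<lambda>t. f t \<omega>)
      = (LINT t|lborel. indicator {0..} t *\<^sub>R (exp (- r * t) * f (max 0 t) \<omega>))" for \<omega>
    unfolding discounted_def set_lebesgue_integral_def
    by (intro Bochner_Integration.integral_cong) (auto simp: indicator_def)
  moreover have "(\<lambda>\<omega>. LINT t|lborel. indicator {0..} t *\<^sub>R (exp (- r * t) * f (max 0 t) \<omega>))
      \<in> borel_measurable M"
    by (rule lborel.borel_measurable_lebesgue_integral) (simp add: split_beta')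
  ultimately show ?thesis by simp
qed

lemma discounted_tendsto_0:
  fixes f :: "real \<Rightarrow> real \<Rightarrow> real"
  assumes r: "r > 0" and meas: "\<And>z. (\<lambda>t. f z (max 0 t)) \<in> borel_measurable lborel"
    and bound: "\<And>z t. 0 \<le> t \<Longrightarrow> \<bar>f z t\<bar> \<le> c"
    and lim: "\<And>t. 0 \<le> t \<Longrightarrow> ((\<lambda>z. f z t) \<longlongrightarrow> 0) at_top"
  shows "((\<lambda>z. discounted r (f z)) \<longlongrightarrow> 0) at_top"
proof -
  define s where "s z t = indicator {0..} t * (exp (- r * t) * f z (max 0 t))" for z t
  have "((\<lambda>z. integral\<^sup>L lborel (s z)) \<longlongrightarrow> integral\<^sup>L lborel (\<lambda>_::real. 0::real)) at_top"
  proof (rule integral_dominated_convergence_at_top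
      [where w="\<lambda>t. c * (indicator {0..} t * exp (- r * t))"])
    show "integrable lborel (\<lambda>t. c * (indicator {0..} t * exp (- r * t)))"
      using has_bochner_integral_exp_neg[OF r] by (auto simp: has_bochner_integral_iff)
    show "s z \<in> borel_measurable lborel" for z
      unfolding s_def using meas[of z] by measurable
    show "\<forall>\<^sub>F z in at_top. AE t in lborel. norm (s z t) \<le> c * (indicator {0..} t * exp (- r * t))"
      using bound by (intro always_eventually allI AE_I2) (auto simp: s_def indicator_def abs_mult)
    show "AE t in lborel. ((\<lambda>z. s z t) \<longlongrightarrow> 0) at_top"
      using lim unfolding s_def
      by (intro AE_I2) (auto intro!: tendsto_mult_right_zero simp: indicator_def)
  qed simp
  moreover have "discounted r (f z) = integral\<^sup>L lborel (s z)" for z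
    unfolding discounted_def set_lebesgue_integral_def s_def
    by (intro Bochner_Integration.integral_cong) (auto simp: indicator_def)
  ultimately show ?thesis by simp
qed

section \<open>Processes with continuous paths\<close>

lemma cSUP_atLeastAtMost_eq_SUP_Rats:
  fixes g :: "real \<Rightarrow> real"
  assumes cont: "continuous_on {0..T} g" and T: "0 \<le> T"
  shows "(SUP s\<in>{0..T}. g s) = (SUP q\<in>\<rat>. g (max 0 (min q T)))"
proof -
  define h where "h q = g (max 0 (min q T))" for q
  have clamp: "(\<lambda>q. max 0 (min q T)) ` UNIV = {0..T}"
  proof
    show "{0..T} \<subseteq> (\<lambda>q. max 0 (min q T)) ` UNIV"
    proof
      fix s assume "s \<in> {0..T}"
      then have "s = max 0 (min s T)" by auto
      then show "s \<in> (\<lambda>q. max 0 (min q T)) ` UNIV" by blast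
    qed
  qed (use T in auto)
  then have range_h: "range h = g ` {0..T}"
    unfolding h_def by (metis image_image)
  have "continuous_on UNIV h"
    unfolding h_def
    by (rule continuous_on_compose2[OF cont]) (use T in \<open>auto intro!: continuous_intros\<close>)
  then have dense: "range h \<subseteq> closure (h ` \<rat>)"
    using continuous_image_closure_subset[of UNIV h \<rat>] by (simp add: Rats_closure_real)
  have bdd: "bdd_above (range h)"
    unfolding range_h
    by (intro bounded_imp_bdd_above compact_imp_bounded compact_continuous_image cont) simp
  then have bdd_Rats: "bdd_above (h ` \<rat>)"
    by (rule bdd_above_mono) auto
  have "closure (h ` \<rat>) \<subseteq> {..Sup (h ` \<rat>)}"
    using bdd_Rats by (intro closure_minimal) (auto intro: cSup_upper)
  then have "Sup (range h) \<le> Sup (h ` \<rat>)"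
    using dense by (intro cSup_least) auto
  moreover have "Sup (h ` \<rat>) \<le> Sup (range h)"
    using bdd by (intro cSup_subset_mono) (auto simp: Rats_def)
  ultimately show ?thesis
    using range_h unfolding h_def by (metis order_antisym)
qed

text \<open>Processes are only specified for \<open>t \<ge> 0\<close>; evaluating them at \<open>max 0 t\<close> extends them
  to all of \<open>\<real>\<close>, so that joint measurability can be stated on \<open>lborel \<Otimes>\<^sub>M M\<close>.\<close>

lemma borel_measurable_continuous_paths:
  fixes X :: "real \<Rightarrow> 'a \<Rightarrow> 'b::metric_space"
  assumes meas: "\<And>t. 0 \<le> t \<Longrightarrow> X t \<in> borel_measurable M"
    and cont: "\<And>\<omega>. \<omega> \<in> space M \<Longrightarrow> continuous_on {0..} (\<lambda>t. X t \<omega>)"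
  shows "(\<lambda>p. X (max 0 (fst p)) (snd p)) \<in> borel_measurable (lborel \<Otimes>\<^sub>M M)"
proof (rule borel_measurable_LIMSEQ_metric)
  define grid where "grid n t = real_of_int \<lceil>real (Suc n) * t\<rceil> / real (Suc n)" for n t
  show "(\<lambda>p. X (max 0 (grid n (fst p))) (snd p)) \<in> borel_measurable (lborel \<Otimes>\<^sub>M M)" for n
    unfolding grid_def
  proof (rule measurable_compose_countable
      [where f="\<lambda>i p. X (max 0 (real_of_int i / real (Suc n))) (snd p)"])
    fix i :: int
    have [measurable]: "X (max 0 (real_of_int i / real (Suc n))) \<in> borel_measurable M"
      by (rule meas) simp
    show "(\<lambda>p. X (max 0 (real_of_int i / real (Suc n))) (snd p)) \<in> borel_measurable (lborel \<Otimes>\<^sub>M M)"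
      by measurable
  qed measurable
  fix p :: "real \<times> 'a" assume "p \<in> space (lborel \<Otimes>\<^sub>M M)"
  then have \<omega>: "snd p \<in> space M" by (auto simp: space_pair_measure)
  have grid_lower: "t \<le> grid n t" for n t
    unfolding grid_def by (simp add: field_simps)
  have grid_upper: "grid n t \<le> t + 1 / real (Suc n)" for n t
  proof -
    have "grid n t \<le> (real (Suc n) * t + 1) / real (Suc n)"
      unfolding grid_def by (intro divide_right_mono) linarith+
    also have "\<dots> = t + 1 / real (Suc n)"
      by (simp add: add_divide_distrib)
    finally show ?thesis .
  qed
  have "(\<lambda>n. grid n (fst p)) \<longlonglongrightarrow> fst p"
  proof (rule tendsto_sandwich[where f="\<lambda>_. fst p" and h="\<lambda>n. fst p + 1 / real (Suc n)"])
    show "(\<lambda>n. fst p + 1 / real (Suc n)) \<longlonglongrightarrow> fst p"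
      using tendsto_add[OF tendsto_const LIMSEQ_Suc[OF lim_const_over_n[of 1]]] by simp
  qed (use grid_lower grid_upper in auto)
  then have "(\<lambda>n. max 0 (grid n (fst p))) \<longlonglongrightarrow> max 0 (fst p)"
    by (intro tendsto_intros)
  then show "(\<lambda>n. X (max 0 (grid n (fst p))) (snd p)) \<longlonglongrightarrow> X (max 0 (fst p)) (snd p)"
    by (rule continuous_on_tendsto_compose[OF cont[OF \<omega>]]) simp_all
qed

lemma borel_measurable_path:
  assumes "(\<lambda>p. f (max 0 (fst p)) (snd p)) \<in> borel_measurable (lborel \<Otimes>\<^sub>M M)" "\<omega> \<in> space M"
  shows "(\<lambda>t. f (max 0 t) \<omega>) \<in> borel_measurable lborel"
  using measurable_comp[OF measurable_Pair2'[OF assms(2)] assms(1)] by (simp add: comp_def)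

section \<open>Admissible strategies, surplus and drawdown\<close>

lemma
  assumes "is_standard_BM M W"
  shows standard_BM_prob_space: "prob_space M"
    and standard_BM_measurable: "0 \<le> t \<Longrightarrow> W t \<in> borel_measurable M"
    and standard_BM_continuous: "\<omega> \<in> space M \<Longrightarrow> continuous_on {0..} (\<lambda>t. W t \<omega>)"
  using assms unfolding is_standard_BM_def by auto

lemma borel_measurable_standard_BM:
  "is_standard_BM M W \<Longrightarrow> (\<lambda>p. W (max 0 (fst p)) (snd p)) \<in> borel_measurable (lborel \<Otimes>\<^sub>M M)"
  by (intro borel_measurable_continuous_paths standard_BM_measurable standard_BM_continuous)

lemma
  assumes "U \<in> admissible M W u0" "0 \<le> t" "\<omega> \<in> space M"
  shows admissible_nonneg: "0 \<le> U t \<omega>"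
    and admissible_le: "U t \<omega> \<le> u0"
  using assms unfolding admissible_def by auto

lemma borel_measurable_admissible:
  "U \<in> admissible M W u0 \<Longrightarrow> (\<lambda>p. U (fst p) (snd p)) \<in> borel_measurable (lborel \<Otimes>\<^sub>M M)"
  unfolding admissible_def by (simp add: split_beta')

lemma borel_measurable_admissible_path:
  assumes "U \<in> admissible M W u0" "\<omega> \<in> space M"
  shows "(\<lambda>t. U t \<omega>) \<in> borel_measurable lborel"
  using measurable_comp[OF measurable_Pair2'[OF assms(2)] borel_measurable_admissible[OF assms(1)]]
  by (simp add: comp_def)

lemma constant_admissible:
  assumes "0 \<le> u0"
  shows "(\<lambda>t \<omega>. u0) \<in> admissible M W u0"
proof -
  have "A \<in> aug_filtration M W t" if "A = {} \<or> A = space M" for A t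
  proof -
    have "A \<in> nat_filtration M W t"
      using that unfolding nat_filtration_def by (auto intro: sigma_sets.Empty sigma_sets_top)
    then show ?thesis
      unfolding aug_filtration_def by (intro CollectI exI[of _ A] exI[of _ "{}"]) auto
  qed
  then show ?thesis unfolding admissible_def using assms by auto
qed

lemma set_integrable_admissible:
  assumes "U \<in> admissible M W u0" "\<omega> \<in> space M"
    and "A \<in> sets lborel" "emeasure lborel A < \<infinity>" "A \<subseteq> {0..}"
  shows "set_integrable lborel A (\<lambda>t. U t \<omega>)"
  unfolding set_integrable_def
proof (rule integrableI_bounded_set_indicator[where B=u0])
  show "AE t in lborel. t \<in> A \<longrightarrow> norm (U t \<omega>) \<le> u0"
    using admissible_nonneg[OF assms(1) _ assms(2)] admissible_le[OF assms(1) _ assms(2)] assms(5)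
    by (intro AE_I2) auto
qed (use assms borel_measurable_admissible_path in auto)

lemma cumulative_dividends_nonneg:
  assumes "U \<in> admissible M W u0" "\<omega> \<in> space M"
  shows "0 \<le> (LINT s:{0..t}|lborel. U s \<omega>)"
  unfolding set_lebesgue_integral_def
  using admissible_nonneg[OF assms(1) _ assms(2)]
  by (intro Bochner_Integration.integral_nonneg) (auto simp: indicator_def)

lemma lipschitz_on_cumulative_dividends:
  assumes U: "U \<in> admissible M W u0" and \<omega>: "\<omega> \<in> space M"
  shows "lipschitz_on u0 {0..} (\<lambda>t. LINT s:{0..t}|lborel. U s \<omega>)"
proof (rule lipschitz_onI)
  show "0 \<le> u0"
    using admissible_nonneg[OF U _ \<omega>, of 0] admissible_le[OF U _ \<omega>, of 0] by simp
  have increment: "\<bar>(LINT s:{0..b}|lborel. U s \<omega>) - (LINT s:{0..a}|lborel. U s \<omega>)\<bar> \<le> u0 * (b - a)"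
    if ab: "0 \<le> a" "a \<le> b" for a b
  proof -
    have "{0..b} = {0..a} \<union> {a<..b}" using ab by auto
    then have union: "(LINT s:{0..b}|lborel. U s \<omega>)
        = (LINT s:{0..a}|lborel. U s \<omega>) + (LINT s:{a<..b}|lborel. U s \<omega>)"
      using ab by (simp only:) (intro set_integral_Un set_integrable_admissible[OF U \<omega>], auto)
    have "0 \<le> (LINT s:{a<..b}|lborel. U s \<omega>)"
      unfolding set_lebesgue_integral_def using admissible_nonneg[OF U _ \<omega>] ab
      by (intro Bochner_Integration.integral_nonneg) (auto simp: indicator_def)
    moreover have "(LINT s:{a<..b}|lborel. U s \<omega>) \<le> (LINT s:{a<..b}|lborel. u0)"
      using admissible_le[OF U _ \<omega>] ab
      by (intro set_integral_mono set_integrable_admissible[OF U \<omega>])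
        (auto simp: set_integrable_def intro!: integrable_real_mult_indicator)
    ultimately show ?thesis
      using ab union by (simp add: set_integral_const mult.commute)
  qed
  fix x y :: real assume "x \<in> {0..}" "y \<in> {0..}"
  then show "dist (LINT s:{0..x}|lborel. U s \<omega>) (LINT s:{0..y}|lborel. U s \<omega>) \<le> u0 * dist x y"
    using increment[of x y] increment[of y x]
    by (cases "x \<le> y") (auto simp: dist_real_def abs_minus_commute)
qed

lemma borel_measurable_cumulative_dividends:
  assumes "U \<in> admissible M W u0"
  shows "(\<lambda>p. LINT s:{0..max 0 (fst p)}|lborel. U s (snd p)) \<in> borel_measurable (lborel \<Otimes>\<^sub>M M)"
proof -
  have [measurable]: "(\<lambda>p. U (fst p) (snd p)) \<in> borel_measurable (lborel \<Otimes>\<^sub>M M)"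
    by (rule borel_measurable_admissible[OF assms])
  have "(\<lambda>q. (\<lambda>p. U (fst p) (snd p)) (snd q, snd (fst q)))
      \<in> borel_measurable ((lborel \<Otimes>\<^sub>M M) \<Otimes>\<^sub>M lborel)"
    by measurable
  then have [measurable]:
    "(\<lambda>q. U (snd q) (snd (fst q))) \<in> borel_measurable ((lborel \<Otimes>\<^sub>M M) \<Otimes>\<^sub>M lborel)"
    by simp
  have "(\<lambda>p. LINT s|lborel. indicator {0..max 0 (fst p)} s *\<^sub>R U s (snd p))
      \<in> borel_measurable (lborel \<Otimes>\<^sub>M M)"
  proof (rule lborel.borel_measurable_lebesgue_integral)
    have "(\<lambda>q. indicator {0..max 0 (fst (fst q))} (snd q) *\<^sub>R U (snd q) (snd (fst q)))
        = (\<lambda>q. (if 0 \<le> snd q \<and> snd q \<le> max 0 (fst (fst q)) then 1 else 0)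
            * U (snd q) (snd (fst q)))"
      by (auto simp: indicator_def fun_eq_iff)
    then show "(\<lambda>(p, s). indicator {0..max 0 (fst p)} s *\<^sub>R U s (snd p))
        \<in> borel_measurable ((lborel \<Otimes>\<^sub>M M) \<Otimes>\<^sub>M lborel)"
      unfolding split_beta' by simp
  qed
  then show ?thesis unfolding set_lebesgue_integral_def .
qed

lemma continuous_on_surplus:
  assumes "is_standard_BM M W" "U \<in> admissible M W u0" "\<omega> \<in> space M"
  shows "continuous_on {0..} (\<lambda>t. surplus \<mu> \<sigma> W U t \<omega>)"
  unfolding surplus_def
  using standard_BM_continuous[OF assms(1,3)]
    lipschitz_on_continuous_on[OF lipschitz_on_cumulative_dividends[OF assms(2,3)]]
  by (intro continuous_intros) auto

lemma borel_measurable_surplus: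
  assumes "is_standard_BM M W" "U \<in> admissible M W u0"
  shows "(\<lambda>p. surplus \<mu> \<sigma> W U (max 0 (fst p)) (snd p)) \<in> borel_measurable (lborel \<Otimes>\<^sub>M M)"
  unfolding surplus_def
  using borel_measurable_standard_BM[OF assms(1)] borel_measurable_cumulative_dividends[OF assms(2)]
  by measurable

lemma borel_measurable_run_max:
  assumes BM: "is_standard_BM M W" and U: "U \<in> admissible M W u0"
  shows "(\<lambda>p. run_max \<mu> \<sigma> W U z (max 0 (fst p)) (snd p)) \<in> borel_measurable (lborel \<Otimes>\<^sub>M M)"
proof -
  let ?X = "\<lambda>t \<omega>. surplus \<mu> \<sigma> W U t \<omega>"
  let ?S = "\<lambda>t \<omega>. SUP q\<in>\<rat>. ?X (max 0 (min q t)) \<omega>"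
  have [measurable]: "(\<lambda>p. ?X (max 0 (fst p)) (snd p)) \<in> borel_measurable (lborel \<Otimes>\<^sub>M M)"
    by (rule borel_measurable_surplus[OF BM U])
  have cont: "continuous_on {0..t} (\<lambda>s. ?X s \<omega>)" if "\<omega> \<in> space M" for t \<omega>
    by (rule continuous_on_subset[OF continuous_on_surplus[OF BM U that]]) auto
  have "(\<lambda>p. max z (?S (max 0 (fst p)) (snd p))) \<in> borel_measurable (lborel \<Otimes>\<^sub>M M)"
  proof (intro borel_measurable_max borel_measurable_const borel_measurable_cSUP)
    fix q :: real
    have "(\<lambda>p. (\<lambda>p. ?X (max 0 (fst p)) (snd p)) (min q (max 0 (fst p)), snd p))
        \<in> borel_measurable (lborel \<Otimes>\<^sub>M M)"
      by measurable
    then show "(\<lambda>p. ?X (max 0 (min q (max 0 (fst p)))) (snd p)) \<in> borel_measurable (lborel \<Otimes>\<^sub>M M)"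
      by simp
  next
    fix p :: "real \<times> 'a" assume "p \<in> space (lborel \<Otimes>\<^sub>M M)"
    then have "snd p \<in> space M" by (auto simp: space_pair_measure)
    then have "bdd_above ((\<lambda>s. ?X s (snd p)) ` {0..max 0 (fst p)})"
      by (intro bounded_imp_bdd_above compact_imp_bounded compact_continuous_image cont compact_Icc)
    then show "bdd_above ((\<lambda>q. ?X (max 0 (min q (max 0 (fst p)))) (snd p)) ` \<rat>)"
      by (rule bdd_above_mono) auto
  qed (simp add: countable_rat)
  moreover have "run_max \<mu> \<sigma> W U z (max 0 (fst p)) (snd p) = max z (?S (max 0 (fst p)) (snd p))"
    if "p \<in> space (lborel \<Otimes>\<^sub>M M)" for p
  proof -
    have "snd p \<in> space M" using that by (auto simp: space_pair_measure)
    then show ?thesis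
      unfolding run_max_def using cSUP_atLeastAtMost_eq_SUP_Rats[OF cont max.cobounded1] by simp
  qed
  ultimately show ?thesis
    by (subst measurable_cong) auto
qed

lemma borel_measurable_drawdown:
  assumes "is_standard_BM M W" "U \<in> admissible M W u0"
  shows "(\<lambda>p. drawdown \<mu> \<sigma> W U z (max 0 (fst p)) (snd p)) \<in> borel_measurable (lborel \<Otimes>\<^sub>M M)"
  unfolding drawdown_def
  using borel_measurable_run_max[OF assms] borel_measurable_surplus[OF assms]
  by measurable

lemma drawdown_mono: "z1 \<le> z2 \<Longrightarrow> drawdown \<mu> \<sigma> W U z1 t \<omega> \<le> drawdown \<mu> \<sigma> W U z2 t \<omega>"
  unfolding drawdown_def run_max_def by auto

lemma drawdown_gt_if_uncontrolled_below:
  assumes "U \<in> admissible M W u0" "\<omega> \<in> space M"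
    and "\<mu> * t + \<sigma> * W t \<omega> < z - d"
  shows "d < drawdown \<mu> \<sigma> W U z t \<omega>"
proof -
  have "surplus \<mu> \<sigma> W U t \<omega> \<le> \<mu> * t + \<sigma> * W t \<omega>"
    unfolding surplus_def using cumulative_dividends_nonneg[OF assms(1,2)] by auto
  moreover have "z \<le> run_max \<mu> \<sigma> W U z t \<omega>"
    unfolding run_max_def by simp
  ultimately show ?thesis
    using assms(3) unfolding drawdown_def by auto
qed

section \<open>The value function\<close>

locale drawdown_problem =
  fixes M :: "'a measure" and W :: "real \<Rightarrow> 'a \<Rightarrow> real" and \<mu> \<sigma> u0 r \<beta> d :: real
  assumes standard_BM: "is_standard_BM M W"
    and u0_pos: "0 < u0" and r_pos: "0 < r" and \<beta>_pos: "0 < \<beta>"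
begin

sublocale prob_space M
  by (rule standard_BM_prob_space[OF standard_BM])

lemma constant_strategy_admissible: "(\<lambda>_ _. u0) \<in> admissible M W u0"
  using constant_admissible[of u0] u0_pos by simp

definition dividends :: "(real \<Rightarrow> 'a \<Rightarrow> real) \<Rightarrow> 'a \<Rightarrow> real" where
  "dividends U \<omega> = discounted r (\<lambda>t. U t \<omega>)"

definition penalty :: "(real \<Rightarrow> 'a \<Rightarrow> real) \<Rightarrow> real \<Rightarrow> 'a \<Rightarrow> real" where
  "penalty U z \<omega> = discounted r (\<lambda>t. if d < drawdown \<mu> \<sigma> W U z t \<omega> then 1 else 0)"

definition time_above :: "real \<Rightarrow> 'a \<Rightarrow> real" where
  "time_above a \<omega> = discounted r (\<lambda>t. if a \<le> \<mu> * t + \<sigma> * W t \<omega> then 1 else 0)"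

lemma perf_eq: "perf M W \<mu> \<sigma> r \<beta> d U z = expectation (\<lambda>\<omega>. \<beta> * dividends U \<omega> - penalty U z \<omega>)"
  unfolding perf_def dividends_def penalty_def discounted_def by simp

lemma borel_measurable_admissible_at_max:
  assumes "U \<in> admissible M W u0"
  shows "(\<lambda>p. U (max 0 (fst p)) (snd p)) \<in> borel_measurable (lborel \<Otimes>\<^sub>M M)"
proof -
  have [measurable]: "(\<lambda>p. U (fst p) (snd p)) \<in> borel_measurable (lborel \<Otimes>\<^sub>M M)"
    by (rule borel_measurable_admissible[OF assms])
  have "(\<lambda>p. (\<lambda>p. U (fst p) (snd p)) (max 0 (fst p), snd p)) \<in> borel_measurable (lborel \<Otimes>\<^sub>M M)"
    by measurable
  then show ?thesis by simp
qed

lemma borel_measurable_drawdown_indicator: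
  assumes "U \<in> admissible M W u0"
  shows "(\<lambda>p. if d < drawdown \<mu> \<sigma> W U z (max 0 (fst p)) (snd p) then 1 else 0 :: real)
    \<in> borel_measurable (lborel \<Otimes>\<^sub>M M)"
  using borel_measurable_drawdown[OF standard_BM assms] by measurable

lemma borel_measurable_above_indicator:
  "(\<lambda>p. if a \<le> \<mu> * max 0 (fst p) + \<sigma> * W (max 0 (fst p)) (snd p) then 1 else 0 :: real)
    \<in> borel_measurable (lborel \<Otimes>\<^sub>M M)"
  using borel_measurable_standard_BM[OF standard_BM] by measurable

lemma
  assumes "U \<in> admissible M W u0" "\<omega> \<in> space M"
  shows dividends_nonneg: "0 \<le> dividends U \<omega>"
    and dividends_le: "dividends U \<omega> \<le> u0 / r"
  unfolding dividends_def
  using admissible_nonneg[OF assms(1) _ assms(2)] admissible_le[OF assms(1) _ assms(2)]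
  by (auto intro!: discounted_nonneg discounted_le r_pos
      borel_measurable_path[OF borel_measurable_admissible_at_max[OF assms(1)] assms(2)])

lemma
  assumes "U \<in> admissible M W u0" "\<omega> \<in> space M"
  shows penalty_nonneg: "0 \<le> penalty U z \<omega>"
    and penalty_le: "penalty U z \<omega> \<le> 1 / r"
    and set_integrable_penalty:
      "set_integrable lborel {0..}
        (\<lambda>t. exp (- r * t) * (if d < drawdown \<mu> \<sigma> W U z t \<omega> then 1 else 0))"
proof -
  note meas = borel_measurable_path[OF borel_measurable_drawdown_indicator[OF assms(1)] assms(2)]
  show "0 \<le> penalty U z \<omega>"
    unfolding penalty_def by (rule discounted_nonneg) simp
  show "penalty U z \<omega> \<le> 1 / r"
    unfolding penalty_def by (rule discounted_le[OF r_pos meas]) simp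
  show "set_integrable lborel {0..}
      (\<lambda>t. exp (- r * t) * (if d < drawdown \<mu> \<sigma> W U z t \<omega> then 1 else 0))"
    by (rule set_integrable_discounted[OF r_pos meas, where c=1]) simp
qed

lemma
  assumes "\<omega> \<in> space M"
  shows time_above_nonneg: "0 \<le> time_above a \<omega>"
    and time_above_le: "time_above a \<omega> \<le> 1 / r"
    and set_integrable_time_above:
      "set_integrable lborel {0..} (\<lambda>t. exp (- r * t) * (if a \<le> \<mu> * t + \<sigma> * W t \<omega> then 1 else 0))"
proof -
  note meas = borel_measurable_path[OF borel_measurable_above_indicator assms]
  show "0 \<le> time_above a \<omega>"
    unfolding time_above_def by (rule discounted_nonneg) simp
  show "time_above a \<omega> \<le> 1 / r"
    unfolding time_above_def by (rule discounted_le[OF r_pos meas]) simp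
  show "set_integrable lborel {0..} (\<lambda>t. exp (- r * t) * (if a \<le> \<mu> * t + \<sigma> * W t \<omega> then 1 else 0))"
    by (rule set_integrable_discounted[OF r_pos meas, where c=1]) simp
qed

lemma borel_measurable_dividends: "U \<in> admissible M W u0 \<Longrightarrow> dividends U \<in> borel_measurable M"
  unfolding dividends_def[abs_def]
  by (rule borel_measurable_discounted[OF borel_measurable_admissible_at_max])

lemma borel_measurable_penalty: "U \<in> admissible M W u0 \<Longrightarrow> penalty U z \<in> borel_measurable M"
  unfolding penalty_def[abs_def]
  by (rule borel_measurable_discounted[OF borel_measurable_drawdown_indicator])

lemma borel_measurable_time_above: "time_above a \<in> borel_measurable M"
  unfolding time_above_def[abs_def]
  by (rule borel_measurable_discounted[OF borel_measurable_above_indicator])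

lemma scaled_dividends_le:
  assumes "U \<in> admissible M W u0" "\<omega> \<in> space M"
  shows "\<beta> * dividends U \<omega> \<le> \<beta> * u0 / r"
  using mult_left_mono[OF dividends_le[OF assms] less_imp_le[OF \<beta>_pos]] by simp

lemma integrable_reward:
  assumes "U \<in> admissible M W u0"
  shows "integrable M (\<lambda>\<omega>. \<beta> * dividends U \<omega> - penalty U z \<omega>)"
proof (rule integrable_const_bound[where B="\<beta> * u0 / r + 1 / r"])
  show "AE \<omega> in M. norm (\<beta> * dividends U \<omega> - penalty U z \<omega>) \<le> \<beta> * u0 / r + 1 / r"
  proof (rule AE_I2)
    fix \<omega> assume \<omega>: "\<omega> \<in> space M"
    have "0 \<le> \<beta> * dividends U \<omega>"
      using dividends_nonneg[OF assms \<omega>] \<beta>_pos by simp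
    then show "norm (\<beta> * dividends U \<omega> - penalty U z \<omega>) \<le> \<beta> * u0 / r + 1 / r"
      using scaled_dividends_le[OF assms \<omega>] penalty_nonneg[OF assms \<omega>, of z]
        penalty_le[OF assms \<omega>, of z]
      by auto
  qed
qed (use borel_measurable_dividends[OF assms] borel_measurable_penalty[OF assms] in measurable)

lemma integrable_time_above: "integrable M (time_above a)"
  using time_above_nonneg time_above_le borel_measurable_time_above
  by (intro integrable_const_bound[where B="1 / r"]) auto

lemma penalty_mono:
  assumes "U \<in> admissible M W u0" "\<omega> \<in> space M" "z1 \<le> z2"
  shows "penalty U z1 \<omega> \<le> penalty U z2 \<omega>"
  unfolding penalty_def
  using drawdown_mono[OF assms(3)] less_le_trans
  by (intro discounted_mono set_integrable_penalty[OF assms(1,2)]) fastforce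

lemma time_above_plus_penalty_ge:
  assumes "U \<in> admissible M W u0" "\<omega> \<in> space M"
  shows "1 / r \<le> time_above (z - d) \<omega> + penalty U z \<omega>"
proof -
  let ?above = "\<lambda>t. if z - d \<le> \<mu> * t + \<sigma> * W t \<omega> then 1 else 0 :: real"
  let ?drawdown = "\<lambda>t. if d < drawdown \<mu> \<sigma> W U z t \<omega> then 1 else 0 :: real"
  note integrable =
    set_integrable_time_above[OF assms(2), of "z - d"] set_integrable_penalty[OF assms, of z]
  have "1 / r = discounted r (\<lambda>_. 1)"
    by (simp add: discounted_const r_pos)
  also have "\<dots> \<le> discounted r (\<lambda>t. ?above t + ?drawdown t)"
  proof (rule discounted_mono)
    show "set_integrable lborel {0..} (\<lambda>t. exp (- r * t) * 1)"
      using set_integrable_exp_neg[OF r_pos] by simp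
    show "set_integrable lborel {0..} (\<lambda>t. exp (- r * t) * (?above t + ?drawdown t))"
      using set_integral_add(1)[OF integrable] by (simp add: distrib_left)
    show "1 \<le> ?above t + ?drawdown t" if "0 \<le> t" for t
      using drawdown_gt_if_uncontrolled_below[OF assms, of \<mu> t \<sigma> z d] by auto
  qed
  also have "\<dots> = time_above (z - d) \<omega> + penalty U z \<omega>"
    unfolding time_above_def penalty_def by (rule discounted_add[OF integrable])
  finally show ?thesis .
qed

lemma perf_le:
  assumes "U \<in> admissible M W u0"
  shows "perf M W \<mu> \<sigma> r \<beta> d U z \<le> \<beta> * u0 / r"
proof -
  have "perf M W \<mu> \<sigma> r \<beta> d U z \<le> expectation (\<lambda>_. \<beta> * u0 / r)"
    unfolding perf_eq
  proof (rule integral_mono[OF integrable_reward[OF assms] integrable_const])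
    fix \<omega> assume \<omega>: "\<omega> \<in> space M"
    show "\<beta> * dividends U \<omega> - penalty U z \<omega> \<le> \<beta> * u0 / r"
      using scaled_dividends_le[OF assms \<omega>] penalty_nonneg[OF assms \<omega>, of z] by linarith
  qed
  then show ?thesis by (simp add: prob_space)
qed

lemma perf_antimono:
  assumes "U \<in> admissible M W u0" "z1 \<le> z2"
  shows "perf M W \<mu> \<sigma> r \<beta> d U z2 \<le> perf M W \<mu> \<sigma> r \<beta> d U z1"
  unfolding perf_eq
  using penalty_mono[OF assms(1) _ assms(2)]
  by (intro integral_mono integrable_reward[OF assms(1)]) auto

lemma perf_constant_ge: "(\<beta> * u0 - 1) / r \<le> perf M W \<mu> \<sigma> r \<beta> d (\<lambda>_ _. u0) z"
proof -
  have "expectation (\<lambda>_. (\<beta> * u0 - 1) / r) \<le> perf M W \<mu> \<sigma> r \<beta> d (\<lambda>_ _. u0) z"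
    unfolding perf_eq
  proof (rule integral_mono[OF integrable_const integrable_reward[OF constant_strategy_admissible]])
    fix \<omega> assume "\<omega> \<in> space M"
    then show "(\<beta> * u0 - 1) / r \<le> \<beta> * dividends (\<lambda>_ _. u0) \<omega> - penalty (\<lambda>_ _. u0) z \<omega>"
      using penalty_le[OF constant_strategy_admissible]
      unfolding dividends_def discounted_const[OF r_pos]
      by (fastforce simp: diff_divide_distrib)
  qed
  then show ?thesis by (simp add: prob_space)
qed

lemma perf_le_time_above:
  assumes "U \<in> admissible M W u0"
  shows "perf M W \<mu> \<sigma> r \<beta> d U z \<le> (\<beta> * u0 - 1) / r + expectation (time_above (z - d))"
proof -
  have "perf M W \<mu> \<sigma> r \<beta> d U z \<le> expectation (\<lambda>\<omega>. (\<beta> * u0 - 1) / r + time_above (z - d) \<omega>)"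
    unfolding perf_eq
  proof (rule integral_mono[OF integrable_reward[OF assms]])
    show "integrable M (\<lambda>\<omega>. (\<beta> * u0 - 1) / r + time_above (z - d) \<omega>)"
      using integrable_time_above by simp
    fix \<omega> assume \<omega>: "\<omega> \<in> space M"
    show "\<beta> * dividends U \<omega> - penalty U z \<omega> \<le> (\<beta> * u0 - 1) / r + time_above (z - d) \<omega>"
      using scaled_dividends_le[OF assms \<omega>] time_above_plus_penalty_ge[OF assms \<omega>, of z]
      by (simp add: diff_divide_distrib)
  qed
  then show ?thesis
    using integrable_time_above by (simp add: prob_space)
qed

lemma expectation_time_above_tendsto_0: "((\<lambda>a. expectation (time_above a)) \<longlongrightarrow> 0) at_top"
proof -
  have "((\<lambda>a. expectation (time_above a)) \<longlongrightarrow> expectation (\<lambda>_. 0)) at_top"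
  proof (rule integral_dominated_convergence_at_top[where w="\<lambda>_. 1 / r"])
    show "AE \<omega> in M. ((\<lambda>a. time_above a \<omega>) \<longlongrightarrow> 0) at_top"
    proof (rule AE_I2)
      fix \<omega> assume \<omega>: "\<omega> \<in> space M"
      show "((\<lambda>a. time_above a \<omega>) \<longlongrightarrow> 0) at_top"
        unfolding time_above_def
      proof (rule discounted_tendsto_0[where c=1, OF r_pos])
        show "(\<lambda>t. if a \<le> \<mu> * max 0 t + \<sigma> * W (max 0 t) \<omega> then 1 else 0 :: real)
            \<in> borel_measurable lborel" for a
          by (rule borel_measurable_path[OF borel_measurable_above_indicator \<omega>])
        fix t :: real
        have "\<forall>\<^sub>F a in at_top. (if a \<le> \<mu> * t + \<sigma> * W t \<omega> then 1 else 0 :: real) = 0"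
          using eventually_gt_at_top[of "\<mu> * t + \<sigma> * W t \<omega>"] by eventually_elim auto
        then show "((\<lambda>a. if a \<le> \<mu> * t + \<sigma> * W t \<omega> then 1 else 0 :: real) \<longlongrightarrow> 0) at_top"
          by (rule tendsto_eventually)
      qed simp
    qed
    show "\<forall>\<^sub>F a in at_top. AE \<omega> in M. norm (time_above a \<omega>) \<le> 1 / r"
      using time_above_nonneg time_above_le by (intro always_eventually allI AE_I2) auto
  qed (simp_all add: borel_measurable_time_above)
  then show ?thesis by simp
qed

lemma bdd_above_perf: "bdd_above ((\<lambda>U. perf M W \<mu> \<sigma> r \<beta> d U z) ` admissible M W u0)"
  using perf_le by (intro bdd_aboveI) auto

lemma value_fun_le: "value_fun M W \<mu> \<sigma> u0 r \<beta> d z \<le> \<beta> * u0 / r"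
  unfolding value_fun_def using constant_strategy_admissible perf_le by (intro cSUP_least) auto

lemma value_fun_ge: "(\<beta> * u0 - 1) / r \<le> value_fun M W \<mu> \<sigma> u0 r \<beta> d z"
  unfolding value_fun_def
  using perf_constant_ge cSUP_upper[OF constant_strategy_admissible bdd_above_perf]
  by (rule order_trans)

lemma value_fun_antimono:
  assumes "z1 \<le> z2"
  shows "value_fun M W \<mu> \<sigma> u0 r \<beta> d z2 \<le> value_fun M W \<mu> \<sigma> u0 r \<beta> d z1"
  unfolding value_fun_def
proof (rule cSUP_least)
  fix U assume U: "U \<in> admissible M W u0"
  show "perf M W \<mu> \<sigma> r \<beta> d U z2 \<le> (SUP U\<in>admissible M W u0. perf M W \<mu> \<sigma> r \<beta> d U z1)"
    using perf_antimono[OF U assms] cSUP_upper[OF U bdd_above_perf] by (rule order_trans)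
qed (use constant_strategy_admissible in blast)

lemma value_fun_le_time_above:
  "value_fun M W \<mu> \<sigma> u0 r \<beta> d z \<le> (\<beta> * u0 - 1) / r + expectation (time_above (z - d))"
  unfolding value_fun_def using constant_strategy_admissible perf_le_time_above
  by (intro cSUP_least) auto

lemma value_fun_tendsto: "((\<lambda>z. value_fun M W \<mu> \<sigma> u0 r \<beta> d z) \<longlongrightarrow> (\<beta> * u0 - 1) / r) at_top"
proof -
  let ?L = "(\<beta> * u0 - 1) / r"
  have shift: "filterlim (\<lambda>z. z - d) at_top at_top"
    using filterlim_tendsto_add_at_top[OF tendsto_const[of "- d"] filterlim_ident] by simp
  have "((\<lambda>z. expectation (time_above (z - d))) \<longlongrightarrow> 0) at_top"
    by (rule filterlim_compose[OF expectation_time_above_tendsto_0 shift])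
  then have upper: "((\<lambda>z. ?L + expectation (time_above (z - d))) \<longlongrightarrow> ?L) at_top"
    using tendsto_add[OF tendsto_const] by fastforce
  show ?thesis
  proof (rule tendsto_sandwich[OF _ _ tendsto_const upper])
    show "\<forall>\<^sub>F z in at_top. ?L \<le> value_fun M W \<mu> \<sigma> u0 r \<beta> d z"
      by (simp add: value_fun_ge)
    show "\<forall>\<^sub>F z in at_top. value_fun M W \<mu> \<sigma> u0 r \<beta> d z \<le> ?L + expectation (time_above (z - d))"
      by (simp add: value_fun_le_time_above)
  qed
qed

end

theorem lemma1p1:
  fixes M :: "'a measure" and W :: "real \<Rightarrow> 'a \<Rightarrow> real"
    and \<mu> \<sigma> u0 r \<beta> d :: real
  assumes "complete_measure M"
    and "is_standard_BM M W"
    and "\<sigma> > 0" and "u0 > 0" and "r > 0" and "\<beta> > 0" and "d > 0"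
  shows "(\<forall>z1 z2. 0 \<le> z1 \<and> z1 \<le> z2 \<longrightarrow>
            value_fun M W \<mu> \<sigma> u0 r \<beta> d z2 \<le> value_fun M W \<mu> \<sigma> u0 r \<beta> d z1)
       \<and> (\<forall>z\<ge>0. (\<beta> * u0 - 1) / r \<le> value_fun M W \<mu> \<sigma> u0 r \<beta> d z
               \<and> value_fun M W \<mu> \<sigma> u0 r \<beta> d z \<le> \<beta> * u0 / r)
       \<and> ((\<lambda>z. value_fun M W \<mu> \<sigma> u0 r \<beta> d z) \<longlongrightarrow> (\<beta> * u0 - 1) / r) at_top"
proof -
  interpret drawdown_problem M W \<mu> \<sigma> u0 r \<beta> d
    using assms by unfold_locales auto
  show ?thesis
    using value_fun_antimono value_fun_ge value_fun_le value_fun_tendsto by blast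
qed

end
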